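(* Let $\gamma$ be a cover-preserving join-congruence of the square grid $G$ such that $(c_{i-1},c_i)\notin\gamma$ and $(d_{i-1},d_i)\notin\gamma$ for all $i\in\{1,\dots,n\}$. Then $\gamma=\bigvee_{B}\mathrm{con}(B)$, where $B$ ranges over the source cells of $\gamma$, $\mathrm{con}(B)$ is the smallest join-congruence of $G$ collapsing the two upper edges of $B$, and the join is taken in the lattice of join-congruences of $(G;\vee)$.
   Context: $G$ is the direct product of chains $0=c_0\prec\dots\prec c_n$ and $0=d_0\prec\dots\prec d_n$, its elements written uniquely as $c_i\vee d_j$. A join-congruence is an equivalence relation compatible with $\vee$; it is cover-preserving if it is the kernel of a join-homomorphism $\varphi$ with $x\prec y\Rightarrow\varphi(x)\preceq\varphi(y)$. For $i,j\ge1$ the 4-cell with top $c_i\vee d_j$ is $B=\{c_{i-1}\vee d_{j-1},c_{i-1}\vee d_j,c_i\vee d_{j-1},c_i\vee d_j\}$, with upper edges $[c_{i-1}\vee d_j,c_i\vee d_j]$ and $[c_i\vee d_{j-1},c_i\vee d_j]$; $B$ is a source cell of $\gamma$ if $c_{i-1}\vee d_j$, $c_i\vee d_{j-1}$, $c_i\vee d_j$ lie in one $\gamma$-class not containing $c_{i-1}\vee d_{j-1}$. *)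

theory Defs
  imports Main
begin

text \<open>The grid G = chain {0..n} x chain {0..n}; the pair (i,j) stands for c_i join d_j.\<close>

definition grid :: "nat \<Rightarrow> (nat \<times> nat) set" where
  "grid n = {0..n} \<times> {0..n}"

definition gjoin :: "nat \<times> nat \<Rightarrow> nat \<times> nat \<Rightarrow> nat \<times> nat" where
  "gjoin x y = (max (fst x) (fst y), max (snd x) (snd y))"

definition gle :: "nat \<times> nat \<Rightarrow> nat \<times> nat \<Rightarrow> bool" where
  "gle x y \<longleftrightarrow> gjoin x y = y"

definition gcover :: "nat \<Rightarrow> nat \<times> nat \<Rightarrow> nat \<times> nat \<Rightarrow> bool" where
  "gcover n x y \<longleftrightarrow> x \<in> grid n \<and> y \<in> grid n \<and> gle x y \<and> x \<noteq> y \<and>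
     \<not> (\<exists>z \<in> grid n. gle x z \<and> gle z y \<and> z \<noteq> x \<and> z \<noteq> y)"

definition scover :: "'b::semilattice_sup \<Rightarrow> 'b \<Rightarrow> bool" where
  "scover a b \<longleftrightarrow> a < b \<and> \<not> (\<exists>z. a < z \<and> z < b)"

definition join_cong :: "nat \<Rightarrow> ((nat \<times> nat) \<times> (nat \<times> nat)) set \<Rightarrow> bool" where
  "join_cong n \<theta> \<longleftrightarrow> equiv (grid n) \<theta> \<and>
     (\<forall>x y z. (x, y) \<in> \<theta> \<longrightarrow> z \<in> grid n \<longrightarrow> (gjoin x z, gjoin y z) \<in> \<theta>)"

definition jcong_gen :: "nat \<Rightarrow> ((nat \<times> nat) \<times> (nat \<times> nat)) set \<Rightarrow> ((nat \<times> nat) \<times> (nat \<times> nat)) set" where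
  "jcong_gen n R = \<Inter> {\<theta>. join_cong n \<theta> \<and> R \<subseteq> \<theta>}"

definition cover_preserving_hom :: "nat \<Rightarrow> (nat \<times> nat \<Rightarrow> 'b::semilattice_sup) \<Rightarrow> bool" where
  "cover_preserving_hom n \<phi> \<longleftrightarrow>
     (\<forall>x \<in> grid n. \<forall>y \<in> grid n. \<phi> (gjoin x y) = sup (\<phi> x) (\<phi> y)) \<and>
     (\<forall>x y. gcover n x y \<longrightarrow> \<phi> x = \<phi> y \<or> scover (\<phi> x) (\<phi> y))"

definition kernel_on :: "nat \<Rightarrow> (nat \<times> nat \<Rightarrow> 'b) \<Rightarrow> ((nat \<times> nat) \<times> (nat \<times> nat)) set" where
  "kernel_on n \<phi> = {(x, y). x \<in> grid n \<and> y \<in> grid n \<and> \<phi> x = \<phi> y}"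

text \<open>the 4-cell with top (i,j) is a source cell of gamma\<close>
definition source_cell :: "nat \<Rightarrow> ((nat \<times> nat) \<times> (nat \<times> nat)) set \<Rightarrow> nat \<Rightarrow> nat \<Rightarrow> bool" where
  "source_cell n \<gamma> i j \<longleftrightarrow> 1 \<le> i \<and> i \<le> n \<and> 1 \<le> j \<and> j \<le> n \<and>
     ((i - 1, j), (i, j)) \<in> \<gamma> \<and> ((i, j - 1), (i, j)) \<in> \<gamma> \<and>
     ((i - 1, j - 1), (i, j)) \<notin> \<gamma>"

definition con_cell :: "nat \<Rightarrow> nat \<Rightarrow> nat \<Rightarrow> ((nat \<times> nat) \<times> (nat \<times> nat)) set" where
  "con_cell n i j = jcong_gen n {((i - 1, j), (i, j)), ((i, j - 1), (i, j))}"

end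

theory Submission
  imports Defs
begin

text \<open>
  The generated congruence is contained in \<gamma>, since \<gamma> collapses the upper edges of its source cells.
  Conversely, let \<theta> be a join-congruence containing those edges. As \<phi> is monotone, \<gamma> is
  generated by the unit edges it collapses, so it suffices to put each of them into \<theta>. Take a
  collapsed horizontal edge [c, d] and the cell a, b, c, d below it (a \<prec> b, a \<prec> c, b \<prec> d).
  If neither [a, b] nor [b, d] were collapsed we would have \<phi> a < \<phi> b < \<phi> d = \<phi> c,
  contradicting that \<phi> maps the cover a \<prec> c to a cover. So either [a, b] is collapsed and [c, d]
  is its translate by joining with c, or the cell is a source cell. Induction upwards from the bottom
  row, none of whose edges is collapsed, handles all horizontal edges; vertical ones follow by
  transposing the grid.
\<close>

lemma grid_Pair_iff [simp]: "(a, b) \<in> grid n \<longleftrightarrow> a \<le> n \<and> b \<le> n"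
  by (auto simp: grid_def)

lemma gjoin_Pair [simp]: "gjoin (a, b) (c, d) = (max a c, max b d)"
  by (simp add: gjoin_def)

lemma mem_kernel_on_iff: "(x, y) \<in> kernel_on n \<phi> \<longleftrightarrow> x \<in> grid n \<and> y \<in> grid n \<and> \<phi> x = \<phi> y"
  by (simp add: kernel_on_def)

lemma gcover_vertical_edge: "i \<le> n \<Longrightarrow> j < n \<Longrightarrow> gcover n (i, j) (i, Suc j)"
  unfolding gcover_def gle_def by auto

lemma subset_jcong_gen: "R \<subseteq> jcong_gen n R"
  unfolding jcong_gen_def by blast

lemma jcong_gen_least: "join_cong n \<theta> \<Longrightarrow> R \<subseteq> \<theta> \<Longrightarrow> jcong_gen n R \<subseteq> \<theta>"
  unfolding jcong_gen_def by blast

lemma subset_jcong_genI: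
  "(\<And>\<theta>. join_cong n \<theta> \<Longrightarrow> R \<subseteq> \<theta> \<Longrightarrow> S \<subseteq> \<theta>) \<Longrightarrow> S \<subseteq> jcong_gen n R"
  unfolding jcong_gen_def by blast

definition transpose_rel :: "(('a \<times> 'a) \<times> ('a \<times> 'a)) set \<Rightarrow> (('a \<times> 'a) \<times> ('a \<times> 'a)) set" where
  "transpose_rel \<theta> = {(x, y). (prod.swap x, prod.swap y) \<in> \<theta>}"

lemma mem_transpose_rel_iff [simp]: "(x, y) \<in> transpose_rel \<theta> \<longleftrightarrow> (prod.swap x, prod.swap y) \<in> \<theta>"
  by (simp add: transpose_rel_def)

lemma swap_in_grid_iff [simp]: "prod.swap x \<in> grid n \<longleftrightarrow> x \<in> grid n"
  by (cases x) auto

lemma gjoin_swap: "gjoin (prod.swap x) (prod.swap y) = prod.swap (gjoin x y)"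
  by (cases x, cases y) auto

lemma gle_swap_iff [simp]: "gle (prod.swap x) (prod.swap y) \<longleftrightarrow> gle x y"
  by (cases x, cases y) (auto simp: gle_def)

lemma gcover_swap_iff: "gcover n (prod.swap x) (prod.swap y) \<longleftrightarrow> gcover n x y"
  unfolding gcover_def by (metis gle_swap_iff swap_in_grid_iff swap_swap)

lemma equiv_transpose_rel:
  assumes "equiv (grid n) \<theta>"
  shows "equiv (grid n) (transpose_rel \<theta>)"
proof (rule equivI)
  have "\<theta> \<subseteq> grid n \<times> grid n" and "refl_on (grid n) \<theta>"
    using assms by (auto elim: equivE)
  then show "transpose_rel \<theta> \<subseteq> grid n \<times> grid n" and "refl_on (grid n) (transpose_rel \<theta>)"
    by (auto simp: refl_on_def)
  show "sym (transpose_rel \<theta>)"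
    using assms by (auto simp: equiv_def intro!: symI dest: symD)
  show "trans (transpose_rel \<theta>)"
    using assms by (auto simp: equiv_def intro!: transI dest: transD)
qed

lemma join_cong_transpose_rel:
  assumes "join_cong n \<theta>"
  shows "join_cong n (transpose_rel \<theta>)"
proof -
  have "equiv (grid n) \<theta>" and compat: "\<And>x y z. (x, y) \<in> \<theta> \<Longrightarrow> z \<in> grid n \<Longrightarrow> (gjoin x z, gjoin y z) \<in> \<theta>"
    using assms by (auto simp: join_cong_def)
  have "(gjoin x z, gjoin y z) \<in> transpose_rel \<theta>"
    if "(x, y) \<in> transpose_rel \<theta>" "z \<in> grid n" for x y z
    using compat[of "prod.swap x" "prod.swap y" "prod.swap z"] that by (simp add: gjoin_swap)
  with equiv_transpose_rel[OF \<open>equiv (grid n) \<theta>\<close>] show ?thesis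
    by (simp add: join_cong_def)
qed

lemma kernel_on_comp_swap: "kernel_on n (\<phi> \<circ> prod.swap) = transpose_rel (kernel_on n \<phi>)"
  by (auto simp: kernel_on_def)

lemma cover_preserving_hom_comp_swap:
  assumes "cover_preserving_hom n \<phi>"
  shows "cover_preserving_hom n (\<phi> \<circ> prod.swap)"
  using assms unfolding cover_preserving_hom_def
  by (metis comp_apply gcover_swap_iff gjoin_swap swap_in_grid_iff)

lemma source_cell_transpose_rel_iff:
  "source_cell n (transpose_rel \<gamma>) i j \<longleftrightarrow> source_cell n \<gamma> j i"
  by (auto simp: source_cell_def)

lemma join_hom_mono:
  fixes \<phi> :: "nat \<times> nat \<Rightarrow> 'b::semilattice_sup"
  assumes hom: "\<And>x y. x \<in> grid n \<Longrightarrow> y \<in> grid n \<Longrightarrow> \<phi> (gjoin x y) = sup (\<phi> x) (\<phi> y)"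
    and "a \<le> c" "c \<le> n" "b \<le> d" "d \<le> n"
  shows "\<phi> (a, b) \<le> \<phi> (c, d)"
proof -
  have "\<phi> (c, d) = sup (\<phi> (a, b)) (\<phi> (c, d))"
    using hom[of "(a, b)" "(c, d)"] assms by (simp add: max_absorb2)
  then show ?thesis
    by (metis sup.cobounded1)
qed

lemma chain_in_trans:
  fixes p :: "nat \<Rightarrow> 'a"
  assumes "trans \<theta>" "(p a, p a) \<in> \<theta>" "a \<le> c"
    and "\<And>k. a < k \<Longrightarrow> k \<le> c \<Longrightarrow> (p (k - 1), p k) \<in> \<theta>"
  shows "(p a, p c) \<in> \<theta>"
  using assms(3,4)
proof (induction c rule: dec_induct)
  case base
  show ?case using assms(2) .
next
  case (step m)
  then have "(p a, p m) \<in> \<theta>" and "(p m, p (Suc m)) \<in> \<theta>"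
    using step.prems[of "Suc m"] by simp_all
  then show ?case using assms(1) by (auto dest: transD)
qed

lemma kernel_on_subset_if_edges:
  fixes \<phi> :: "nat \<times> nat \<Rightarrow> 'b::semilattice_sup"
  assumes eqv: "equiv (grid n) \<theta>"
    and hom: "\<And>x y. x \<in> grid n \<Longrightarrow> y \<in> grid n \<Longrightarrow> \<phi> (gjoin x y) = sup (\<phi> x) (\<phi> y)"
    and horizontal: "\<And>i j. 1 \<le> i \<Longrightarrow> i \<le> n \<Longrightarrow> j \<le> n \<Longrightarrow> \<phi> (i - 1, j) = \<phi> (i, j) \<Longrightarrow> ((i - 1, j), (i, j)) \<in> \<theta>"
    and vertical: "\<And>i j. 1 \<le> j \<Longrightarrow> j \<le> n \<Longrightarrow> i \<le> n \<Longrightarrow> \<phi> (i, j - 1) = \<phi> (i, j) \<Longrightarrow> ((i, j - 1), (i, j)) \<in> \<theta>"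
  shows "kernel_on n \<phi> \<subseteq> \<theta>"
proof -
  have sym: "sym \<theta>" and trans: "trans \<theta>" and refl: "refl_on (grid n) \<theta>"
    using eqv by (auto elim: equivE)
  have mono: "\<phi> (a, b) \<le> \<phi> (c, d)" if "a \<le> c" "c \<le> n" "b \<le> d" "d \<le> n" for a b c d
    using hom that by (rule join_hom_mono)
  have below: "((a, b), (c, d)) \<in> \<theta>"
    if "a \<le> c" "c \<le> n" "b \<le> d" "d \<le> n" "\<phi> (a, b) = \<phi> (c, d)" for a b c d
  proof -
    \<comment> \<open>\<phi> is constant on the monotone path from (a, b) via (c, b) to (c, d)\<close>
    have "((a, b), (c, b)) \<in> \<theta>"
    proof (rule chain_in_trans[OF trans, where p = "\<lambda>k. (k, b)"])
      show "((a, b), (a, b)) \<in> \<theta>" using refl that by (simp add: refl_onD)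
      fix k assume "a < k" "k \<le> c"
      then have "\<phi> (a, b) \<le> \<phi> (k - 1, b)" "\<phi> (k - 1, b) \<le> \<phi> (k, b)" "\<phi> (k, b) \<le> \<phi> (c, d)"
        using mono[of a "k - 1" b b] mono[of "k - 1" k b b] mono[of k c b d] that by simp_all
      then have "\<phi> (k - 1, b) = \<phi> (k, b)"
        using that(5) by (metis antisym order.trans)
      with \<open>a < k\<close> \<open>k \<le> c\<close> show "((k - 1, b), (k, b)) \<in> \<theta>"
        using that horizontal by simp
    qed (use that in simp)
    moreover have "((c, b), (c, d)) \<in> \<theta>"
    proof (rule chain_in_trans[OF trans, where p = "\<lambda>k. (c, k)"])
      show "((c, b), (c, b)) \<in> \<theta>" using refl that by (simp add: refl_onD)
      fix k assume "b < k" "k \<le> d"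
      then have "\<phi> (a, b) \<le> \<phi> (c, k - 1)" "\<phi> (c, k - 1) \<le> \<phi> (c, k)" "\<phi> (c, k) \<le> \<phi> (c, d)"
        using mono[of a c b "k - 1"] mono[of c c "k - 1" k] mono[of c c k d] that by simp_all
      then have "\<phi> (c, k - 1) = \<phi> (c, k)"
        using that(5) by (metis antisym order.trans)
      with \<open>b < k\<close> \<open>k \<le> d\<close> show "((c, k - 1), (c, k)) \<in> \<theta>"
        using that vertical by simp
    qed (use that in simp)
    ultimately show ?thesis using trans by (auto dest: transD)
  qed
  show ?thesis
  proof
    fix p assume "p \<in> kernel_on n \<phi>"
    then obtain a b c d where p: "p = ((a, b), (c, d))" and bounds: "a \<le> n" "b \<le> n" "c \<le> n" "d \<le> n"
      and eq: "\<phi> (a, b) = \<phi> (c, d)"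
      by (auto simp: kernel_on_def)
    have top: "\<phi> (max a c, max b d) = \<phi> (a, b)"
      using hom[of "(a, b)" "(c, d)"] bounds eq by simp
    have "((a, b), (max a c, max b d)) \<in> \<theta>" and "((c, d), (max a c, max b d)) \<in> \<theta>"
      using below bounds top eq by simp_all
    then show "p \<in> \<theta>"
      using p sym trans by (meson symD transD)
  qed
qed

lemma cell_bottom_or_right_collapsed:
  assumes hom: "cover_preserving_hom n \<phi>"
    and "1 \<le> i" "i \<le> n" "j < n"
    and top: "\<phi> (i - 1, Suc j) = \<phi> (i, Suc j)"
  shows "\<phi> (i - 1, j) = \<phi> (i, j) \<or> \<phi> (i, j) = \<phi> (i, Suc j)"
proof (rule ccontr)
  assume "\<not> ?thesis"
  moreover have "\<phi> (i - 1, j) \<le> \<phi> (i, j)" and "\<phi> (i, j) \<le> \<phi> (i, Suc j)"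
    using join_hom_mono[of n \<phi>] hom assms(2-4) by (simp_all add: cover_preserving_hom_def)
  ultimately have "\<phi> (i - 1, j) < \<phi> (i, j)" and "\<phi> (i, j) < \<phi> (i - 1, Suc j)"
    using top by auto
  moreover have "gcover n (i - 1, j) (i - 1, Suc j)"
    using gcover_vertical_edge assms by simp
  then have "\<phi> (i - 1, j) = \<phi> (i - 1, Suc j) \<or> scover (\<phi> (i - 1, j)) (\<phi> (i - 1, Suc j))"
    using hom unfolding cover_preserving_hom_def by blast
  ultimately show False
    unfolding scover_def by (metis order.strict_trans order.irrefl)
qed

lemma horizontal_edge_in_join_cong:
  assumes cong: "join_cong n \<theta>" and hom: "cover_preserving_hom n \<phi>"
    and bottom: "\<And>i. 1 \<le> i \<Longrightarrow> i \<le> n \<Longrightarrow> ((i - 1, 0), (i, 0)) \<notin> kernel_on n \<phi>"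
    and sources: "\<And>i j. source_cell n (kernel_on n \<phi>) i j \<Longrightarrow> ((i - 1, j), (i, j)) \<in> \<theta>"
    and "1 \<le> i" "i \<le> n" "j \<le> n" "\<phi> (i - 1, j) = \<phi> (i, j)"
  shows "((i - 1, j), (i, j)) \<in> \<theta>"
  using assms(7-)
proof (induction j)
  case 0
  then show ?case using assms(5,6) bottom[of i] by (simp add: mem_kernel_on_iff)
next
  case (Suc j)
  show ?case
  proof (cases "\<phi> (i - 1, j) = \<phi> (i, j)")
    case True
    with Suc have "((i - 1, j), (i, j)) \<in> \<theta>" by simp
    moreover have "(i - 1, Suc j) \<in> grid n" using Suc.prems assms(6) by simp
    ultimately have "(gjoin (i - 1, j) (i - 1, Suc j), gjoin (i, j) (i - 1, Suc j)) \<in> \<theta>"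
      using cong unfolding join_cong_def by blast
    then show ?thesis by (simp add: max_absorb1)
  next
    case False
    then have "\<phi> (i, j) = \<phi> (i, Suc j)"
      using cell_bottom_or_right_collapsed[OF hom assms(5,6), of j] Suc.prems by simp
    with False Suc.prems assms(5,6) have "source_cell n (kernel_on n \<phi>) i (Suc j)"
      by (simp add: source_cell_def mem_kernel_on_iff)
    then show ?thesis using sources by blast
  qed
qed

lemma kernel_on_subset_join_cong:
  assumes cong: "join_cong n \<theta>" and hom: "cover_preserving_hom n \<phi>"
    and bottom: "\<And>i. 1 \<le> i \<Longrightarrow> i \<le> n \<Longrightarrow> ((i - 1, 0), (i, 0)) \<notin> kernel_on n \<phi>"
    and left: "\<And>i. 1 \<le> i \<Longrightarrow> i \<le> n \<Longrightarrow> ((0, i - 1), (0, i)) \<notin> kernel_on n \<phi>"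
    and sources: "\<And>i j. source_cell n (kernel_on n \<phi>) i j \<Longrightarrow>
      ((i - 1, j), (i, j)) \<in> \<theta> \<and> ((i, j - 1), (i, j)) \<in> \<theta>"
  shows "kernel_on n \<phi> \<subseteq> \<theta>"
proof (rule kernel_on_subset_if_edges)
  show "equiv (grid n) \<theta>" using cong by (simp add: join_cong_def)
  show "\<phi> (gjoin x y) = sup (\<phi> x) (\<phi> y)" if "x \<in> grid n" "y \<in> grid n" for x y
    using hom that by (simp add: cover_preserving_hom_def)
  show "((i - 1, j), (i, j)) \<in> \<theta>"
    if "1 \<le> i" "i \<le> n" "j \<le> n" "\<phi> (i - 1, j) = \<phi> (i, j)" for i j
    using horizontal_edge_in_join_cong[OF cong hom bottom] sources that by blast
  show "((i, j - 1), (i, j)) \<in> \<theta>"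
    if "1 \<le> j" "j \<le> n" "i \<le> n" "\<phi> (i, j - 1) = \<phi> (i, j)" for i j
  proof -
    have "((j - 1, i), (j, i)) \<in> transpose_rel \<theta>"
    proof (rule horizontal_edge_in_join_cong[OF join_cong_transpose_rel[OF cong]
          cover_preserving_hom_comp_swap[OF hom]])
      show "((k - 1, 0), (k, 0)) \<notin> kernel_on n (\<phi> \<circ> prod.swap)" if "1 \<le> k" "k \<le> n" for k
        using left[OF that] by (simp add: kernel_on_comp_swap)
      show "((k - 1, l), (k, l)) \<in> transpose_rel \<theta>"
        if "source_cell n (kernel_on n (\<phi> \<circ> prod.swap)) k l" for k l
        using sources that by (simp add: kernel_on_comp_swap source_cell_transpose_rel_iff)
    qed (use that in simp_all)
    then show ?thesis by simp
  qed
qed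

theorem lemma4p7:
  fixes n :: nat
    and \<gamma> :: "((nat \<times> nat) \<times> (nat \<times> nat)) set"
    and \<phi> :: "nat \<times> nat \<Rightarrow> 'b::semilattice_sup"
  assumes "join_cong n \<gamma>"
    and "cover_preserving_hom n \<phi>"
    and "\<gamma> = kernel_on n \<phi>"
    and "\<And>i. 1 \<le> i \<Longrightarrow> i \<le> n \<Longrightarrow> ((i - 1, 0), (i, 0)) \<notin> \<gamma>"
    and "\<And>i. 1 \<le> i \<Longrightarrow> i \<le> n \<Longrightarrow> ((0, i - 1), (0, i)) \<notin> \<gamma>"
  shows "\<gamma> = jcong_gen n (\<Union> {con_cell n i j | i j. source_cell n \<gamma> i j})"
    (is "\<gamma> = jcong_gen n ?U")
proof
  have "con_cell n i j \<subseteq> \<gamma>" if "source_cell n \<gamma> i j" for i j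
    using that unfolding con_cell_def source_cell_def by (intro jcong_gen_least[OF assms(1)]) auto
  then show "jcong_gen n ?U \<subseteq> \<gamma>"
    by (intro jcong_gen_least[OF assms(1)]) blast
  show "\<gamma> \<subseteq> jcong_gen n ?U"
  proof (rule subset_jcong_genI)
    fix \<theta> assume cong: "join_cong n \<theta>" and "?U \<subseteq> \<theta>"
    then have "((i - 1, j), (i, j)) \<in> \<theta> \<and> ((i, j - 1), (i, j)) \<in> \<theta>"
      if "source_cell n \<gamma> i j" for i j
      using that subset_jcong_gen[of "{((i - 1, j), (i, j)), ((i, j - 1), (i, j))}" n]
      unfolding con_cell_def by blast
    with kernel_on_subset_join_cong[OF cong assms(2)] assms(3-5) show "\<gamma> \<subseteq> \<theta>"
      by simp
  qed
qed

end
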